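(* Let $\|\cdot\|$ be a norm on $\mathbb R^d$ such that for every measurable $h$ with values in $\mathbb R^d$, $\big\|\int h\,d\mathbb P_{X_1}\big\|\le\int\|h\|\,d\mathbb P_{X_1}$ and $\big\|\int h\,d\mathbb P_{\varepsilon}\big\|\le\int\|h\|\,d\mathbb P_{\varepsilon}$. Let $n\ge 2$ and let $f:\mathcal X^n\to\mathbb R^d$ be measurable with $\|f(x_1,\dots,x_n)-f(x_1',\dots,x_n')\|\le\sum_{i=1}^n d_{\mathcal X}(x_i,x_i')$, with $f(X_1,\dots,X_n)$ integrable. Let $\mathcal F_0=\{\emptyset,\Omega\}$, $\mathcal F_k=\sigma(X_1,\dots,X_k)$, $g_k(X_1,\dots,X_k)=\mathbb E[f(X_1,\dots,X_n)\mid\mathcal F_k]$ for $0\le k\le n$, and $M_k=g_k(X_1,\dots,X_k)-g_{k-1}(X_1,\dots,X_{k-1})$ for $1\le k\le n$. Assume (C1). Then: 1. For every $k\in[1,n]$, $\|g_k(x_1,\dots,x_k)-g_k(x_1',\dots,x_k')\|\le d_{\mathcal X}(x_1,x_1')+\dots+d_{\mathcal X}(x_{k-1},x_{k-1}')+K_{k,n}\,d_{\mathcal X}(x_k,x_k')$. 2. With $H_{k,\varepsilon}(x,y)=\int d_{\mathcal X}(F_k(x,y),F_k(x,y'))\,\mathbb P_\varepsilon(dy')$ for $k\in[2,n]$: $\|M_1\|\le K_{1,n}G_{X_1}(X_1)$ and $\|M_k\|\le K_{k,n}H_{k,\varepsilon}(X_{k-1},\varepsilon_k)$ for $k\in[2,n]$.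 3. If moreover (C2) holds, then $H_{k,\varepsilon}(x,y)\le\tau_kG_\varepsilon(y)+\xi_k$ and hence $\|M_k\|\le K_{k,n}[\tau_kG_\varepsilon(\varepsilon_k)+\xi_k]$ for $k\in[2,n]$. 4. If condition (A) holds, then $\sup_{n\ge2}K_{1,n}<\infty$ and $\sup_{n\ge 2}\max_{2\le k\le n}K_{k,n}(\tau_k+\xi_k)<\infty$. 5. If condition (B) holds, then $\sup_{n\ge2}K_{1,n}<\infty$ and there is $C<\infty$ such that $K_{k,n}(\tau_k+\xi_k)\le Ck^{\alpha}$ for all $n\ge2$, $2\le k\le n$. 6. If condition (C) holds, then $\sup_{n\ge2}K_{1,n}<\infty$ and there is $C<\infty$ such that $K_{k,n}\tau_k\le Ck^{-\alpha}$ for all $n\ge 2$, $2\le k\le n$.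
   Context: Setting. $(\mathcal X,d_{\mathcal X})$ and $(\mathcal Y,\delta)$ are complete separable metric spaces. $\varepsilon$ is a $\mathcal Y$-valued random variable with law $\mathbb P_\varepsilon$, $(\varepsilon_i)_{i\ge1}$ are i.i.d. copies of $\varepsilon$, and $X_1$ is an $\mathcal X$-valued random variable with law $\mathbb P_{X_1}$, independent of $(\varepsilon_i)_{i\ge2}$. For $n\ge2$, $F_n:\mathcal X\times\mathcal Y\to\mathcal X$ is measurable and $X_n=F_n(X_{n-1},\varepsilon_n)$. Condition (C1): for every $n\ge2$ there is $\rho_n\in[0,1)$ with $\mathbb E[d_{\mathcal X}(F_n(x,\varepsilon_1),F_n(x',\varepsilon_1))]\le\rho_n d_{\mathcal X}(x,x')$ for all $x,x'\in\mathcal X$. Condition (C2): for every $n\ge2$ there are $\tau_n\ge0,\xi_n\ge0$ with $d_{\mathcal X}(F_n(x,y),F_n(x,y'))\le\tau_n\delta(y,y')+\xi_n$ for all $x\in\mathcal X$, $y,y'\in\mathcal Y$. $K_{k,n}=1+\rho_{k+1}+\rho_{k+1}\rho_{k+2}+\dots+\rho_{k+1}\rho_{k+2}\cdots\rho_n$ for $1\le k\le n-1$, and $K_{n,n}=1$. $G_{X_1}(x)=\int d_{\mathcal X}(x,x')\,\mathbb P_{X_1}(dx')$, $G_\varepsilon(y)=\int\delta(y,y')\,\mathbb P_\varepsilon(dy')$. Condition (A): there are constants $\alpha\in[0,1)$, $\rho\in(0,1)$, $\eta>0$ with $\rho_n\le1-\rho/n^\alpha$ and $\max\{\xi_n,\tau_n\}\le\eta/n^\alpha$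 for all $n\ge2$. Condition (B): there are constants $\alpha\in(0,1)$, $\rho\in(0,1)$, $\eta>0$ with $\rho_n\le1-\rho/n^\alpha$ and $\max\{\xi_n,\tau_n\}\le\eta$ for all $n\ge2$. Condition (C): there are constants $\alpha\in(0,1]$, $\rho\in(0,1)$, $\eta>0$ with $\rho_n\le\rho$ and $\max\{\xi_n,\tau_n\}\le\eta/n^\alpha$ for all $n\ge2$. *)

theory Defs
  imports "HOL-Probability.Probability"
begin

definition Kc :: "(nat \<Rightarrow> real) \<Rightarrow> nat \<Rightarrow> nat \<Rightarrow> real" where
  "Kc \<rho> k n = (\<Sum>j=k..n. \<Prod>i\<in>{k+1..j}. \<rho> i)"

definition is_norm :: "('v::real_vector \<Rightarrow> real) \<Rightarrow> bool" where
  "is_norm N \<longleftrightarrow> (\<forall>x. N x = 0 \<longleftrightarrow> x = 0) \<and> (\<forall>c x. N (c *\<^sub>R x) = \<bar>c\<bar> * N x)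
     \<and> (\<forall>x y. N (x + y) \<le> N x + N y)"

definition is_cond_exp_version ::
  "'a measure \<Rightarrow> 'a measure \<Rightarrow> ('a \<Rightarrow> 'v::{banach,second_countable_topology}) \<Rightarrow> ('a \<Rightarrow> 'v) \<Rightarrow> bool" where
  "is_cond_exp_version M Fk Y Z \<longleftrightarrow>
     Z \<in> borel_measurable Fk \<and> integrable M Z \<and>
     (\<forall>A\<in>sets Fk. (LINT \<omega>:A|M. Z \<omega>) = (LINT \<omega>:A|M. Y \<omega>))"

definition Xvec :: "(nat \<Rightarrow> 'a \<Rightarrow> 'x) \<Rightarrow> nat \<Rightarrow> 'a \<Rightarrow> (nat \<Rightarrow> 'x)" where
  "Xvec X k \<omega> = (\<lambda>i\<in>{1..k}. X i \<omega>)"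

text \<open>F_k = sigma(X_1,...,X_k); for k = 0 this is the trivial algebra {{}, Omega}.\<close>
definition Filt :: "'a measure \<Rightarrow> (nat \<Rightarrow> 'a \<Rightarrow> 'x::topological_space) \<Rightarrow> nat \<Rightarrow> 'a measure" where
  "Filt M X k = vimage_algebra (space M) (Xvec X k) (PiM {1..k} (\<lambda>_. borel))"

end

theory Submission
  imports Defs
begin

text \<open>The functions \<open>g\<^sub>k\<close> are computed backwards from \<open>g\<^sub>n = f\<close>: since \<open>\<epsilon>\<^sub>k\<^sub>+\<^sub>1\<close> is independent
  of \<open>(X\<^sub>1, \<dots>, X\<^sub>k)\<close>, \<open>g\<^sub>k(x) = \<integral> g\<^sub>k\<^sub>+\<^sub>1(x, F\<^sub>k\<^sub>+\<^sub>1(x\<^sub>k, y)) \<bbbP>\<^sub>\<epsilon>(dy)\<close>. Integrating the Lipschitz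
  bound of \<open>g\<^sub>k\<^sub>+\<^sub>1\<close> against \<open>\<bbbP>\<^sub>\<epsilon>\<close> (Jensen for \<open>N\<close>) and using the contraction (C1) in the last
  coordinate gives the weight \<open>1 + \<rho>\<^sub>k\<^sub>+\<^sub>1 K\<^sub>k\<^sub>+\<^sub>1\<^sub>,\<^sub>n = K\<^sub>k\<^sub>,\<^sub>n\<close>; the same estimate with the first
  \<open>k - 1\<close> coordinates frozen bounds the martingale differences. The growth of \<open>K\<^sub>k\<^sub>,\<^sub>n\<close> under
  (A)--(C) follows by comparing it with explicit supersolutions of its backward recursion.\<close>

section \<open>The constants \<open>K\<^sub>k\<^sub>,\<^sub>n\<close>\<close>

lemma Kc_eq_0: "n < k \<Longrightarrow> Kc \<rho> k n = 0"
  by (simp add: Kc_def)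

lemma Kc_self [simp]: "Kc \<rho> n n = 1"
  by (simp add: Kc_def)

lemma Kc_unfold:
  assumes "k < n"
  shows "Kc \<rho> k n = 1 + \<rho> (Suc k) * Kc \<rho> (Suc k) n"
proof -
  have "{k..n} = insert k {Suc k..n}" using assms by auto
  then have "Kc \<rho> k n = 1 + (\<Sum>j=Suc k..n. \<Prod>i\<in>{Suc k..j}. \<rho> i)"
    by (simp add: Kc_def)
  also have "(\<Sum>j=Suc k..n. \<Prod>i\<in>{Suc k..j}. \<rho> i) = (\<Sum>j=Suc k..n. \<rho> (Suc k) * (\<Prod>i\<in>{Suc (Suc k)..j}. \<rho> i))"
  proof (rule sum.cong[OF refl])
    fix j assume "j \<in> {Suc k..n}"
    then have "{Suc k..j} = insert (Suc k) {Suc (Suc k)..j}" by auto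
    then show "(\<Prod>i\<in>{Suc k..j}. \<rho> i) = \<rho> (Suc k) * (\<Prod>i\<in>{Suc (Suc k)..j}. \<rho> i)" by simp
  qed
  finally show ?thesis by (simp add: Kc_def sum_distrib_left)
qed

lemma Kc_nonneg: "(\<And>i. k < i \<Longrightarrow> 0 \<le> \<rho> i) \<Longrightarrow> 0 \<le> Kc \<rho> k n"
  unfolding Kc_def by (intro sum_nonneg prod_nonneg) auto

lemma Kc_le_supersolution:
  assumes rho: "\<And>i. 2 \<le> i \<Longrightarrow> 0 \<le> \<rho> i"
    and B_ge_1: "\<And>k. 1 \<le> k \<Longrightarrow> 1 \<le> B k"
    and B_step: "\<And>k. 1 \<le> k \<Longrightarrow> 1 + \<rho> (Suc k) * B (Suc k) \<le> B k"
    and k: "1 \<le> k"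
  shows "Kc \<rho> k n \<le> B k"
  using k
proof (induction "n - k" arbitrary: k)
  case 0
  then consider "k = n" | "n < k" by linarith
  then show ?case
    by cases (use B_ge_1[OF "0.prems"] in \<open>simp_all add: Kc_eq_0\<close>)
next
  case (Suc d)
  then have "k < n" by simp
  have "Kc \<rho> k n = 1 + \<rho> (Suc k) * Kc \<rho> (Suc k) n"
    by (rule Kc_unfold[OF \<open>k < n\<close>])
  also have "\<dots> \<le> 1 + \<rho> (Suc k) * B (Suc k)"
    using Suc rho[of "Suc k"] by (simp add: mult_left_mono)
  also have "\<dots> \<le> B k"
    by (rule B_step[OF Suc.prems])
  finally show ?case .
qed

lemma Kc_le_geometric:
  assumes "\<And>i. 2 \<le> i \<Longrightarrow> 0 \<le> \<rho> i \<and> \<rho> i \<le> r" "r < 1" "1 \<le> k"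
  shows "Kc \<rho> k n \<le> 1 / (1 - r)"
proof (rule Kc_le_supersolution[where B = "\<lambda>_. 1 / (1 - r)"])
  have "0 \<le> r" using assms(1)[of 2] by simp
  with assms(2) show "1 \<le> 1 / (1 - r)" by simp
  fix k :: nat assume "1 \<le> k"
  then have "\<rho> (Suc k) * (1 / (1 - r)) \<le> r * (1 / (1 - r))"
    using assms by (intro mult_right_mono) auto
  then show "1 + \<rho> (Suc k) * (1 / (1 - r)) \<le> 1 / (1 - r)"
    using assms(2) by (simp add: field_simps)
qed (use assms in auto)

lemma powr_add_one_diff_le:
  fixes x \<alpha> :: real
  assumes "0 < x" "0 \<le> \<alpha>" "\<alpha> \<le> 1"
  shows "(x + 1) powr \<alpha> - x powr \<alpha> \<le> x powr (\<alpha> - 1)"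
proof -
  have "x + 1 = x * (1 + 1/x)"
    using assms by (simp add: field_simps)
  then have "(x + 1) powr \<alpha> = x powr \<alpha> * (1 + 1/x) powr \<alpha>"
    using assms by (simp add: powr_mult)
  also have "\<dots> \<le> x powr \<alpha> * (1 + 1/x)"
    using powr_mono[of \<alpha> 1 "1 + 1/x"] assms by (intro mult_left_mono) auto
  also have "\<dots> = x powr \<alpha> + x powr (\<alpha> - 1)"
    using assms by (simp add: powr_diff field_simps)
  finally show ?thesis by simp
qed

lemma powr_increment_le:
  fixes x \<alpha> c :: real
  assumes "0 < x" "0 \<le> \<alpha>" "\<alpha> \<le> 1" "0 \<le> c" "c \<le> x powr (1 - \<alpha>)"
  shows "c * ((x + 1) powr \<alpha> - x powr \<alpha>) \<le> 1"
proof -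
  have "c * ((x + 1) powr \<alpha> - x powr \<alpha>) \<le> c * x powr (\<alpha> - 1)"
    using powr_add_one_diff_le[OF assms(1-3)] assms(4) by (rule mult_left_mono)
  also have "\<dots> \<le> 1"
    using assms by (simp add: powr_diff field_simps)
  finally show ?thesis .
qed

lemma ex_nat_powr_ge:
  assumes "0 < \<beta>"
  shows "\<exists>m::nat. 1 \<le> m \<and> c \<le> real m powr \<beta>"
proof (intro exI conjI)
  define m :: nat where "m = nat \<lceil>\<bar>c\<bar> powr (1 / \<beta>)\<rceil> + 1"
  show "1 \<le> m" by (simp add: m_def)
  have "\<bar>c\<bar> powr (1 / \<beta>) \<le> real m"
    unfolding m_def by linarith
  then have "(\<bar>c\<bar> powr (1 / \<beta>)) powr \<beta> \<le> real m powr \<beta>"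
    using assms by (intro powr_mono2) auto
  then show "c \<le> real m powr \<beta>"
    using assms by (cases "c = 0") (auto simp: powr_powr)
qed

lemma powr_add_le_mult:
  fixes k m \<alpha> :: real
  assumes "1 \<le> k" "0 \<le> m" "0 \<le> \<alpha>"
  shows "(k + m) powr \<alpha> \<le> (1 + m) powr \<alpha> * k powr \<alpha>"
proof -
  have "m * 1 \<le> m * k" using assms by (intro mult_left_mono) auto
  then have "k + m \<le> (1 + m) * k" by (simp add: algebra_simps)
  then have "(k + m) powr \<alpha> \<le> ((1 + m) * k) powr \<alpha>"
    using assms by (intro powr_mono2) auto
  then show ?thesis using assms by (simp add: powr_mult)
qed

text \<open>The supersolution is \<open>B\<^sub>k = (2/r) (k + m)\<^sup>\<alpha>\<close>, with the shift \<open>m\<close> chosen so large that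
  \<open>B\<^sub>k\<^sub>+\<^sub>1 - B\<^sub>k \<le> 1\<close>.\<close>
lemma Kc_le_powr:
  assumes rho: "\<And>i. 2 \<le> i \<Longrightarrow> 0 \<le> \<rho> i \<and> \<rho> i \<le> 1 - r / real i powr \<alpha>"
    and \<alpha>: "0 \<le> \<alpha>" "\<alpha> < 1" and r: "0 < r" "r < 1"
  shows "\<exists>C. \<forall>k\<ge>1. \<forall>n. Kc \<rho> k n \<le> C * real k powr \<alpha>"
proof -
  define c where "c = 2 / r"
  have "1 \<le> c" using r by (simp add: c_def)
  obtain m :: nat where "1 \<le> m" and m_large: "c \<le> real m powr (1 - \<alpha>)"
    using ex_nat_powr_ge[of "1 - \<alpha>" c] \<alpha> by auto
  define B where "B k = c * (real k + real m) powr \<alpha>" for k :: nat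
  have B_increment: "B (Suc k) - B k \<le> 1" for k
  proof -
    have "real m powr (1 - \<alpha>) \<le> (real k + real m) powr (1 - \<alpha>)"
      using \<alpha> by (intro powr_mono2) auto
    then have "c * ((real k + real m + 1) powr \<alpha> - (real k + real m) powr \<alpha>) \<le> 1"
      using \<open>1 \<le> m\<close> \<open>1 \<le> c\<close> \<alpha> m_large by (intro powr_increment_le) auto
    then show ?thesis by (simp add: B_def add_ac right_diff_distrib)
  qed
  have "Kc \<rho> k n \<le> B k" if "1 \<le> k" for k n
  proof (rule Kc_le_supersolution[OF _ _ _ that])
    fix k :: nat assume k: "1 \<le> k"
    have "1 \<le> (real k + real m) powr \<alpha>"
      using \<alpha> k by (auto intro: ge_one_powr_ge_zero)
    with \<open>1 \<le> c\<close> show "1 \<le> B k" unfolding B_def by (metis mult_mono' mult_1 zero_le_one)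
    have "real (Suc k) powr \<alpha> \<le> (real (Suc k) + real m) powr \<alpha>"
      using \<alpha> by (intro powr_mono2) auto
    then have "2 \<le> r * (B (Suc k) / real (Suc k) powr \<alpha>)"
      using r by (simp add: B_def c_def field_simps)
    moreover have "\<rho> (Suc k) * B (Suc k) \<le> (1 - r / real (Suc k) powr \<alpha>) * B (Suc k)"
      using rho[of "Suc k"] k \<open>1 \<le> c\<close> by (intro mult_right_mono) (auto simp: B_def)
    moreover have "(1 - r / real (Suc k) powr \<alpha>) * B (Suc k)
        = B (Suc k) - r * (B (Suc k) / real (Suc k) powr \<alpha>)"
      by (simp only: left_diff_distrib mult_1 times_divide_eq_left times_divide_eq_right)
    ultimately show "1 + \<rho> (Suc k) * B (Suc k) \<le> B k"
      using B_increment[of k] by linarith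
  qed (use rho in auto)
  moreover have "B k \<le> (c * (1 + real m) powr \<alpha>) * real k powr \<alpha>" if "1 \<le> k" for k
    using powr_add_le_mult[of "real k" "real m" \<alpha>] that \<alpha> \<open>1 \<le> c\<close> by (simp add: B_def)
  ultimately show ?thesis by (meson order_trans)
qed

lemma Kc_bounds_cond_A:
  assumes rho_nonneg: "\<forall>m\<ge>2. 0 \<le> \<rho> m"
    and "0 \<le> \<alpha> \<and> \<alpha> < 1 \<and> 0 < r \<and> r < 1 \<and> 0 < \<eta> \<and>
      (\<forall>m\<ge>2. \<rho> m \<le> 1 - r / real m powr \<alpha> \<and> max (\<xi> m) (\<tau> m) \<le> \<eta> / real m powr \<alpha>)"
  shows "(\<exists>B. \<forall>m\<ge>2. Kc \<rho> 1 m \<le> B) \<and> (\<exists>B. \<forall>m\<ge>2. \<forall>k\<in>{2..m}. Kc \<rho> k m * (\<tau> k + \<xi> k) \<le> B)"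
proof -
  have \<alpha>: "0 \<le> \<alpha>" "\<alpha> < 1" and r: "0 < r" "r < 1" and \<eta>: "0 \<le> \<eta>"
    using assms(2) by auto
  have rho: "\<And>m. 2 \<le> m \<Longrightarrow> 0 \<le> \<rho> m \<and> \<rho> m \<le> 1 - r / real m powr \<alpha>"
    and coef: "\<And>m. 2 \<le> m \<Longrightarrow> max (\<xi> m) (\<tau> m) \<le> \<eta> / real m powr \<alpha>"
    using assms by auto
  obtain C where C: "\<And>k n. 1 \<le> k \<Longrightarrow> Kc \<rho> k n \<le> C * real k powr \<alpha>"
    using Kc_le_powr[OF rho \<alpha> r] by blast
  have "Kc \<rho> k m * (\<tau> k + \<xi> k) \<le> 2 * \<eta> * C" if "2 \<le> k" for k m
  proof -
    have "\<tau> k + \<xi> k \<le> 2 * \<eta> / real k powr \<alpha>"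
      using coef[OF that] by simp
    then have "Kc \<rho> k m * (\<tau> k + \<xi> k) \<le> Kc \<rho> k m * (2 * \<eta> / real k powr \<alpha>)"
      using rho that by (intro mult_left_mono Kc_nonneg) auto
    also have "\<dots> \<le> (C * real k powr \<alpha>) * (2 * \<eta> / real k powr \<alpha>)"
      using C[of k m] that \<eta> by (intro mult_right_mono) auto
    also have "\<dots> = 2 * \<eta> * C" using that by simp
    finally show ?thesis .
  qed
  moreover have "\<forall>m\<ge>2. Kc \<rho> 1 m \<le> C" using C[of 1] by simp
  ultimately show ?thesis by (meson atLeastAtMost_iff)
qed

lemma Kc_bounds_cond_B:
  assumes rho_nonneg: "\<forall>m\<ge>2. 0 \<le> \<rho> m"
    and "0 < \<alpha> \<and> \<alpha> < 1 \<and> 0 < r \<and> r < 1 \<and> 0 < \<eta> \<and>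
      (\<forall>m\<ge>2. \<rho> m \<le> 1 - r / real m powr \<alpha> \<and> max (\<xi> m) (\<tau> m) \<le> \<eta>)"
  shows "(\<exists>B. \<forall>m\<ge>2. Kc \<rho> 1 m \<le> B) \<and>
    (\<exists>C. \<forall>m\<ge>2. \<forall>k\<in>{2..m}. Kc \<rho> k m * (\<tau> k + \<xi> k) \<le> C * real k powr \<alpha>)"
proof -
  have \<alpha>: "0 \<le> \<alpha>" "\<alpha> < 1" and r: "0 < r" "r < 1" and \<eta>: "0 \<le> \<eta>"
    using assms(2) by auto
  have rho: "\<And>m. 2 \<le> m \<Longrightarrow> 0 \<le> \<rho> m \<and> \<rho> m \<le> 1 - r / real m powr \<alpha>"
    and coef: "\<And>m. 2 \<le> m \<Longrightarrow> max (\<xi> m) (\<tau> m) \<le> \<eta>"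
    using assms by auto
  obtain C where C: "\<And>k n. 1 \<le> k \<Longrightarrow> Kc \<rho> k n \<le> C * real k powr \<alpha>"
    using Kc_le_powr[OF rho \<alpha> r] by blast
  have "Kc \<rho> k m * (\<tau> k + \<xi> k) \<le> (2 * \<eta> * C) * real k powr \<alpha>" if "2 \<le> k" for k m
  proof -
    have "\<tau> k + \<xi> k \<le> 2 * \<eta>"
      using coef[OF that] by simp
    then have "Kc \<rho> k m * (\<tau> k + \<xi> k) \<le> Kc \<rho> k m * (2 * \<eta>)"
      using rho that by (intro mult_left_mono Kc_nonneg) auto
    also have "\<dots> \<le> (C * real k powr \<alpha>) * (2 * \<eta>)"
      using C[of k m] that \<eta> by (intro mult_right_mono) auto
    finally show ?thesis by (simp add: field_simps)
  qed
  moreover have "\<forall>m\<ge>2. Kc \<rho> 1 m \<le> C" using C[of 1] by simp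
  ultimately show ?thesis by (meson atLeastAtMost_iff)
qed

lemma Kc_bounds_cond_C:
  assumes rho_nonneg: "\<forall>m\<ge>2. 0 \<le> \<rho> m"
    and "0 < \<alpha> \<and> \<alpha> \<le> 1 \<and> 0 < r \<and> r < 1 \<and> 0 < \<eta> \<and>
      (\<forall>m\<ge>2. \<rho> m \<le> r \<and> max (\<xi> m) (\<tau> m) \<le> \<eta> / real m powr \<alpha>)"
  shows "(\<exists>B. \<forall>m\<ge>2. Kc \<rho> 1 m \<le> B) \<and>
    (\<exists>C. \<forall>m\<ge>2. \<forall>k\<in>{2..m}. Kc \<rho> k m * \<tau> k \<le> C * real k powr (- \<alpha>))"
proof -
  have r: "r < 1" and \<eta>: "0 \<le> \<eta>"
    using assms(2) by auto
  have rho: "\<And>m. 2 \<le> m \<Longrightarrow> 0 \<le> \<rho> m \<and> \<rho> m \<le> r"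
    and coef: "\<And>m. 2 \<le> m \<Longrightarrow> max (\<xi> m) (\<tau> m) \<le> \<eta> / real m powr \<alpha>"
    using assms by auto
  have K: "Kc \<rho> k n \<le> 1 / (1 - r)" if "1 \<le> k" for k n
    using Kc_le_geometric[OF rho r that] .
  have "Kc \<rho> k m * \<tau> k \<le> (\<eta> / (1 - r)) * real k powr (- \<alpha>)" if "2 \<le> k" for k m
  proof -
    have "\<tau> k \<le> \<eta> * real k powr (- \<alpha>)"
      using coef[OF that] that by (simp add: powr_minus divide_inverse)
    then have "Kc \<rho> k m * \<tau> k \<le> Kc \<rho> k m * (\<eta> * real k powr (- \<alpha>))"
      using rho that by (intro mult_left_mono Kc_nonneg) auto
    also have "\<dots> \<le> (1 / (1 - r)) * (\<eta> * real k powr (- \<alpha>))"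
      using K[of k m] that \<eta> by (intro mult_right_mono) auto
    finally show ?thesis by simp
  qed
  moreover have "\<forall>m\<ge>2. Kc \<rho> 1 m \<le> 1 / (1 - r)" using K[of 1] by simp
  ultimately show ?thesis by (meson atLeastAtMost_iff)
qed

section \<open>Norms and Jensen-type estimates\<close>

context
  fixes N :: "'v::euclidean_space \<Rightarrow> real"
  assumes N: "is_norm N"
begin

lemma is_norm_zero: "N 0 = 0"
  using N by (simp add: is_norm_def)

lemma is_norm_triangle: "N (x + y) \<le> N x + N y"
  using N by (simp add: is_norm_def)

lemma is_norm_scaleR: "N (c *\<^sub>R x) = \<bar>c\<bar> * N x"
  using N by (simp add: is_norm_def)

lemma is_norm_minus_commute: "N (x - y) = N (y - x)"
  using is_norm_scaleR[of "-1" "x - y"] by simp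

lemma is_norm_nonneg: "0 \<le> N x"
  using is_norm_triangle[of x "- x"] is_norm_scaleR[of "-1" x] by (simp add: is_norm_zero)

lemma is_norm_sum_le: "N (sum g A) \<le> (\<Sum>i\<in>A. N (g i))"
proof (induction A rule: infinite_finite_induct)
  case (insert x A)
  then show ?case using is_norm_triangle[of "g x" "sum g A"] by simp
qed (simp_all add: is_norm_zero)

lemma is_norm_le_norm: "\<exists>B\<ge>0. \<forall>x. N x \<le> B * norm x"
proof (intro exI conjI allI)
  show "0 \<le> (\<Sum>b\<in>Basis. N b)" by (intro sum_nonneg is_norm_nonneg)
  fix x :: 'v
  have "N x = N (\<Sum>b\<in>Basis. (x \<bullet> b) *\<^sub>R b)" by (simp add: euclidean_representation)
  also have "\<dots> \<le> (\<Sum>b\<in>Basis. \<bar>x \<bullet> b\<bar> * N b)"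
    using is_norm_sum_le[of "\<lambda>b. (x \<bullet> b) *\<^sub>R b" Basis] by (simp add: is_norm_scaleR)
  also have "\<dots> \<le> (\<Sum>b\<in>Basis. norm x * N b)"
    by (intro sum_mono mult_right_mono Basis_le_norm is_norm_nonneg)
  finally show "N x \<le> (\<Sum>b\<in>Basis. N b) * norm x"
    by (simp add: sum_distrib_left mult.commute)
qed

lemma continuous_on_is_norm: "continuous_on S N"
proof -
  obtain B where "0 \<le> B" and B: "\<And>x. N x \<le> B * norm x"
    using is_norm_le_norm by blast
  have "\<bar>N x - N y\<bar> \<le> B * norm (x - y)" for x y
    using is_norm_triangle[of y "x - y"] is_norm_triangle[of x "y - x"]
      is_norm_minus_commute[of y x] B[of "x - y"] by simp
  with \<open>0 \<le> B\<close> have "B-lipschitz_on S N"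
    by (intro lipschitz_onI) (simp_all add: dist_norm dist_real_def)
  then show ?thesis by (rule lipschitz_on_continuous_on)
qed

text \<open>\<open>N\<close> attains a positive minimum on the unit sphere.\<close>
lemma norm_le_is_norm: "\<exists>c>0. \<forall>x. norm x \<le> c * N x"
proof -
  obtain u where u: "u \<in> sphere 0 1" and u_min: "\<And>y. y \<in> sphere 0 1 \<Longrightarrow> N u \<le> N y"
    using continuous_attains_inf[OF compact_sphere _ continuous_on_is_norm, of 0 1] by auto
  have "N u \<noteq> 0" using N u unfolding is_norm_def by auto
  then have "0 < N u" using is_norm_nonneg[of u] by linarith
  have "norm x \<le> (1 / N u) * N x" for x
  proof (cases "x = 0")
    case False
    then have "N u \<le> N ((1 / norm x) *\<^sub>R x)" by (intro u_min) simp
    then have "N u * norm x \<le> N x" using False by (simp add: is_norm_scaleR field_simps)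
    then show ?thesis using \<open>0 < N u\<close> by (simp add: field_simps)
  qed (simp add: is_norm_zero)
  with \<open>0 < N u\<close> show ?thesis by (intro exI[of _ "1 / N u"]) auto
qed

end

lemma (in prob_space) nn_integral_le_affine:
  assumes "d \<in> borel_measurable M" "0 \<le> S" "0 \<le> K" "\<And>x. 0 \<le> d x"
    and "\<And>x. u x \<le> K * d x + S"
  shows "(\<integral>\<^sup>+x. ennreal (u x) \<partial>M) \<le> ennreal K * (\<integral>\<^sup>+x. ennreal (d x) \<partial>M) + ennreal S"
proof -
  have "ennreal (u x) \<le> ennreal K * ennreal (d x) + ennreal S" for x
  proof -
    have "ennreal (u x) \<le> ennreal (K * d x + S)" using assms(5) by (rule ennreal_leI)
    also have "\<dots> = ennreal K * ennreal (d x) + ennreal S"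
      using assms(2-4) by (simp add: ennreal_plus ennreal_mult)
    finally show ?thesis .
  qed
  then have "(\<integral>\<^sup>+x. ennreal (u x) \<partial>M) \<le> (\<integral>\<^sup>+x. ennreal K * ennreal (d x) + ennreal S \<partial>M)"
    by (intro nn_integral_mono)
  also have "\<dots> = (\<integral>\<^sup>+x. ennreal K * ennreal (d x) \<partial>M) + (\<integral>\<^sup>+x. ennreal S \<partial>M)"
    using assms(1) by (intro nn_integral_add) auto
  also have "\<dots> = ennreal K * (\<integral>\<^sup>+x. ennreal (d x) \<partial>M) + ennreal S"
    using assms(1) by (simp add: nn_integral_cmult emeasure_space_1)
  finally show ?thesis .
qed

lemma (in prob_space) jensen_integral_diff_le:
  fixes N :: "'b::{banach, second_countable_topology} \<Rightarrow> real"
  assumes jensen: "\<And>h. h \<in> borel_measurable M \<Longrightarrow>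
      ennreal (N (\<integral>x. h x \<partial>M)) \<le> (\<integral>\<^sup>+x. ennreal (N (h x)) \<partial>M)"
    and "integrable M g" "integrable M h"
    and "d \<in> borel_measurable M" "0 \<le> S" "0 \<le> K" "\<And>x. 0 \<le> d x"
    and "\<And>x. N (g x - h x) \<le> K * d x + S"
  shows "ennreal (N ((\<integral>x. g x \<partial>M) - (\<integral>x. h x \<partial>M)))
    \<le> ennreal K * (\<integral>\<^sup>+x. ennreal (d x) \<partial>M) + ennreal S"
proof -
  have "ennreal (N ((\<integral>x. g x \<partial>M) - (\<integral>x. h x \<partial>M))) \<le> (\<integral>\<^sup>+x. ennreal (N (g x - h x)) \<partial>M)"
    using jensen[of "\<lambda>x. g x - h x"] assms(2,3) by simp
  also have "\<dots> \<le> ennreal K * (\<integral>\<^sup>+x. ennreal (d x) \<partial>M) + ennreal S"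
    using assms(4-8) by (rule nn_integral_le_affine)
  finally show ?thesis .
qed

lemma (in prob_space) jensen_deviation_le:
  fixes N :: "'b::{banach, second_countable_topology} \<Rightarrow> real"
  assumes jensen: "\<And>h. h \<in> borel_measurable M \<Longrightarrow>
      ennreal (N (\<integral>x. h x \<partial>M)) \<le> (\<integral>\<^sup>+x. ennreal (N (h x)) \<partial>M)"
    and "integrable M h" "d \<in> borel_measurable M" "0 \<le> K" "\<And>x. 0 \<le> d x"
    and "\<And>x. N (a - h x) \<le> K * d x"
  shows "ennreal (N (a - (\<integral>x. h x \<partial>M))) \<le> ennreal K * (\<integral>\<^sup>+x. ennreal (d x) \<partial>M)"
proof -
  have "ennreal (N ((\<integral>x. a \<partial>M) - (\<integral>x. h x \<partial>M))) \<le> ennreal K * (\<integral>\<^sup>+x. ennreal (d x) \<partial>M) + ennreal 0"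
    using assms by (intro jensen_integral_diff_le[OF jensen]) auto
  moreover have "(\<integral>x. a \<partial>M) = a"
    by (simp add: prob_space)
  ultimately show ?thesis by simp
qed

definition coordwise_lipschitz ::
  "('v::real_vector \<Rightarrow> real) \<Rightarrow> nat \<Rightarrow> real \<Rightarrow> ((nat \<Rightarrow> 'x::metric_space) \<Rightarrow> 'v) \<Rightarrow> bool" where
  "coordwise_lipschitz N k K g \<longleftrightarrow>
    (\<forall>x\<in>space (PiM {1..k} (\<lambda>_. borel)). \<forall>x'\<in>space (PiM {1..k} (\<lambda>_. borel)).
      N (g x - g x') \<le> (\<Sum>i\<in>{1..<k}. dist (x i) (x' i)) + K * dist (x k) (x' k))"

section \<open>The chain and the independence of \<open>\<epsilon>\<^sub>k\<^sub>+\<^sub>1\<close> from the past\<close>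

locale chain_functional = prob_space M for M :: "'a measure" +
  fixes X :: "nat \<Rightarrow> 'a \<Rightarrow> 'x::polish_space"
    and \<epsilon> :: "nat \<Rightarrow> 'a \<Rightarrow> 'y::polish_space"
    and F :: "nat \<Rightarrow> 'x \<Rightarrow> 'y \<Rightarrow> 'x"
    and N :: "real^'d \<Rightarrow> real"
    and f :: "(nat \<Rightarrow> 'x) \<Rightarrow> real^'d"
    and n :: nat
    and \<rho> :: "nat \<Rightarrow> real"
  assumes eps_meas: "\<And>i. \<epsilon> i \<in> borel_measurable M"
    and eps_indep: "indep_vars (\<lambda>_. borel) \<epsilon> {1..}"
    and eps_ident: "\<And>i. i \<ge> 1 \<Longrightarrow> distr M borel (\<epsilon> i) = distr M borel (\<epsilon> 1)"
    and X1_meas: "X 1 \<in> borel_measurable M"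
    and X1_indep: "indep_set
        (sets (vimage_algebra (space M) (X 1) borel))
        (sets (vimage_algebra (space M) (\<lambda>\<omega>. \<lambda>i\<in>{2..}. \<epsilon> i \<omega>) (PiM {2..} (\<lambda>_. borel))))"
    and F_meas: "\<And>m. m \<ge> 2 \<Longrightarrow> (\<lambda>(x, y). F m x y) \<in> borel_measurable (borel \<Otimes>\<^sub>M borel)"
    and X_rec: "\<And>m \<omega>. m \<ge> 2 \<Longrightarrow> X m \<omega> = F m (X (m - 1) \<omega>) (\<epsilon> m \<omega>)"
    and N_norm: "is_norm N"
    and N_jensen_X1: "\<And>h. h \<in> borel_measurable (distr M borel (X 1)) \<Longrightarrow>
        ennreal (N (\<integral>x. h x \<partial>distr M borel (X 1))) \<le> (\<integral>\<^sup>+x. ennreal (N (h x)) \<partial>distr M borel (X 1))"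
    and N_jensen_eps: "\<And>h. h \<in> borel_measurable (distr M borel (\<epsilon> 1)) \<Longrightarrow>
        ennreal (N (\<integral>y. h y \<partial>distr M borel (\<epsilon> 1))) \<le> (\<integral>\<^sup>+y. ennreal (N (h y)) \<partial>distr M borel (\<epsilon> 1))"
    and n2: "n \<ge> 2"
    and f_meas: "f \<in> borel_measurable (PiM {1..n} (\<lambda>_. borel))"
    and f_lip: "\<And>x x'. x \<in> space (PiM {1..n} (\<lambda>_. (borel :: 'x measure))) \<Longrightarrow>
        x' \<in> space (PiM {1..n} (\<lambda>_. (borel :: 'x measure))) \<Longrightarrow>
        N (f x - f x') \<le> (\<Sum>i=1..n. dist (x i) (x' i))"
    and f_int: "integrable M (\<lambda>\<omega>. f (Xvec X n \<omega>))"
    and C1: "\<And>m. m \<ge> 2 \<Longrightarrow> 0 \<le> \<rho> m \<and> \<rho> m < 1 \<and>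
        (\<forall>x x'. (\<integral>\<^sup>+\<omega>. ennreal (dist (F m x (\<epsilon> 1 \<omega>)) (F m x' (\<epsilon> 1 \<omega>))) \<partial>M)
                  \<le> ennreal (\<rho> m * dist x x'))"
begin

abbreviation "law_eps \<equiv> distr M borel (\<epsilon> 1)"
abbreviation "law_X1 \<equiv> distr M borel (X 1)"
abbreviation "law_Xvec k \<equiv> distr M (PiM {1..k} (\<lambda>_. borel)) (Xvec X k)"

lemma prob_space_law_eps: "prob_space law_eps"
  using eps_meas by (rule prob_space_distr)

lemma prob_space_law_X1: "prob_space law_X1"
  using X1_meas by (rule prob_space_distr)

lemma rho_nonneg: "2 \<le> m \<Longrightarrow> 0 \<le> \<rho> m"
  using C1 by blast

lemma Kc_rho_nonneg: "1 \<le> k \<Longrightarrow> 0 \<le> Kc \<rho> k n"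
  by (intro Kc_nonneg rho_nonneg) auto

lemma X_measurable_wrt:
  assumes "X 1 \<in> borel_measurable Q"
    and "\<And>i. 2 \<le> i \<Longrightarrow> i \<le> k \<Longrightarrow> \<epsilon> i \<in> borel_measurable Q"
    and "1 \<le> j" "j \<le> k"
  shows "X j \<in> borel_measurable Q"
  using assms(3,4)
proof (induction j)
  case (Suc j)
  show ?case
  proof (cases "j = 0")
    case False
    then have "(\<lambda>\<omega>. (\<lambda>(x, y). F (Suc j) x y) (X j \<omega>, \<epsilon> (Suc j) \<omega>)) \<in> borel_measurable Q"
      using Suc assms(2) by (intro measurable_compose[OF measurable_Pair F_meas]) auto
    with False show ?thesis using X_rec[of "Suc j"] by simp
  qed (use assms(1) in simp)
qed simp

lemma Xvec_measurable_wrt: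
  assumes "X 1 \<in> borel_measurable Q"
    and "\<And>i. 2 \<le> i \<Longrightarrow> i \<le> k \<Longrightarrow> \<epsilon> i \<in> borel_measurable Q"
  shows "Xvec X k \<in> Q \<rightarrow>\<^sub>M PiM {1..k} (\<lambda>_. borel)"
  unfolding Xvec_def[abs_def]
  by (rule measurable_restrict) (use X_measurable_wrt[OF assms] in auto)

lemma Xvec_measurable: "Xvec X k \<in> M \<rightarrow>\<^sub>M PiM {1..k} (\<lambda>_. borel)"
  using Xvec_measurable_wrt[of M k] X1_meas eps_meas by blast

lemma Xvec_space: "Xvec X k \<omega> \<in> space (PiM {1..k} (\<lambda>_. (borel :: 'x measure)))"
  unfolding Xvec_def space_PiM by auto

lemma pair_sigma_finite_laws: "pair_sigma_finite (law_Xvec k) law_eps"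
  using Xvec_measurable eps_meas
  by (auto simp: pair_sigma_finite_def intro!: prob_space_imp_sigma_finite prob_space_distr)

definition generated_events :: "nat \<Rightarrow> 'a set set" where
  "generated_events i = (if i = 1 then sets (vimage_algebra (space M) (X 1) borel)
     else sets (vimage_algebra (space M) (\<epsilon> i) borel))"

lemma generated_events_X1: "generated_events 1 = {X 1 -` A \<inter> space M |A. A \<in> sets borel}"
  by (simp add: generated_events_def sets_vimage_algebra2)

lemma generated_events_eps:
  "i \<noteq> 1 \<Longrightarrow> generated_events i = {\<epsilon> i -` A \<inter> space M |A. A \<in> sets borel}"
  by (simp add: generated_events_def sets_vimage_algebra2)

lemma generated_events_subset: "generated_events i \<subseteq> events"
  unfolding generated_events_def using X1_meas eps_meas by (auto simp: sets_vimage_algebra2)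

lemma eps_in_tail_algebra:
  assumes "2 \<le> j" "A \<in> sets borel"
  shows "\<epsilon> j -` A \<inter> space M
    \<in> sets (vimage_algebra (space M) (\<lambda>\<omega>. \<lambda>i\<in>{2..}. \<epsilon> i \<omega>) (PiM {2..} (\<lambda>_. borel)))"
    (is "_ \<in> sets ?V")
proof -
  have "(\<lambda>\<omega>. \<lambda>i\<in>{2..}. \<epsilon> i \<omega>) \<in> space M \<rightarrow> space (PiM {2..} (\<lambda>_. (borel :: 'y measure)))"
    unfolding space_PiM by auto
  note tail = measurable_vimage_algebra1[OF this]
  have "(\<lambda>\<omega>. (\<lambda>i\<in>{2..}. \<epsilon> i \<omega>) j) \<in> ?V \<rightarrow>\<^sub>M borel"
    using assms(1) by (intro measurable_compose[OF tail measurable_component_singleton]) simp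
  moreover have "(\<lambda>\<omega>. (\<lambda>i\<in>{2..}. \<epsilon> i \<omega>) j) = \<epsilon> j"
    using assms(1) by (simp add: fun_eq_iff)
  ultimately have "\<epsilon> j -` A \<inter> space ?V \<in> sets ?V"
    using assms(2) by (intro measurable_sets) simp_all
  then show ?thesis by (simp add: space_vimage_algebra)
qed

lemma indep_generated_events_eps: "indep_sets generated_events {2..}"
proof -
  have "indep_sets (\<lambda>i. {\<epsilon> i -` A \<inter> space M |A. A \<in> sets borel}) {1..}"
    using eps_indep unfolding indep_vars_def2 by simp
  then have "indep_sets (\<lambda>i. {\<epsilon> i -` A \<inter> space M |A. A \<in> sets borel}) {2..}"
    by (rule indep_sets_mono_index[rotated]) auto
  then show ?thesis
    by (rule indep_sets_cong[THEN iffD1, rotated -1]) (auto simp: generated_events_eps)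
qed

lemma INT_generated_events_in_tail_algebra:
  assumes "finite J" "J \<noteq> {}" "J \<subseteq> {2..}" "\<And>j. j \<in> J \<Longrightarrow> A j \<in> generated_events j"
  shows "(\<Inter>j\<in>J. A j)
    \<in> sets (vimage_algebra (space M) (\<lambda>\<omega>. \<lambda>i\<in>{2..}. \<epsilon> i \<omega>) (PiM {2..} (\<lambda>_. borel)))"
proof (rule sets.finite_INT[OF assms(1,2)])
  fix j assume "j \<in> J"
  with assms(3) have "2 \<le> j" by auto
  with \<open>j \<in> J\<close> assms(4) have "A j \<in> {\<epsilon> j -` A \<inter> space M |A. A \<in> sets borel}"
    using generated_events_eps[of j] by auto
  then show "A j \<in> sets (vimage_algebra (space M) (\<lambda>\<omega>. \<lambda>i\<in>{2..}. \<epsilon> i \<omega>) (PiM {2..} (\<lambda>_. borel)))"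
    using eps_in_tail_algebra \<open>2 \<le> j\<close> by auto
qed

text \<open>\<open>X\<^sub>1, \<epsilon>\<^sub>2, \<epsilon>\<^sub>3, \<dots>\<close> are independent: \<open>X\<^sub>1\<close> is independent of every finite intersection of
  \<open>\<epsilon>\<close>-events, which lies in the tail algebra.\<close>
lemma indep_generated_events: "indep_sets generated_events {1..}"
proof (rule indep_setsI[OF generated_events_subset])
  fix A J assume J: "J \<noteq> {}" "J \<subseteq> {1..}" "finite J" and A: "\<forall>j\<in>J. A j \<in> generated_events j"
  define J' where "J' = J - {1}"
  have J': "J' \<subseteq> {2..}" "finite J'" using J by (auto simp: J'_def)
  show "prob (\<Inter>j\<in>J. A j) = (\<Prod>j\<in>J. prob (A j))"
  proof (cases "1 \<in> J")
    case False
    have "J \<subseteq> {2..}"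
    proof
      fix j assume "j \<in> J"
      with J(2) False have "1 \<le> j" "j \<noteq> 1" by auto
      then show "j \<in> {2..}" by simp
    qed
    with J A show ?thesis by (intro indep_setsD[OF indep_generated_events_eps]) auto
  next
    case True
    then have J_eq: "J = insert 1 J'" "1 \<notin> J'" by (auto simp: J'_def)
    show ?thesis
    proof (cases "J' = {}")
      case False
      have "A 1 \<in> sets (vimage_algebra (space M) (X 1) borel)"
        using A True by (auto simp: generated_events_def)
      moreover have "(\<Inter>j\<in>J'. A j)
          \<in> sets (vimage_algebra (space M) (\<lambda>\<omega>. \<lambda>i\<in>{2..}. \<epsilon> i \<omega>) (PiM {2..} (\<lambda>_. borel)))"
        using A J' False J_eq by (intro INT_generated_events_in_tail_algebra) auto
      ultimately have "prob (A 1 \<inter> (\<Inter>j\<in>J'. A j)) = prob (A 1) * prob (\<Inter>j\<in>J'. A j)"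
        using X1_indep by (intro indep_setD) auto
      also have "prob (\<Inter>j\<in>J'. A j) = (\<Prod>j\<in>J'. prob (A j))"
        using A J' False J_eq by (intro indep_setsD[OF indep_generated_events_eps]) auto
      finally show ?thesis using J_eq J' by simp
    qed (use J_eq in simp)
  qed
qed

lemma Xvec_measurable_generated:
  assumes "1 \<le> k"
  shows "Xvec X k \<in> sigma (space M) (\<Union>i\<in>{1..k}. generated_events i) \<rightarrow>\<^sub>M PiM {1..k} (\<lambda>_. borel)"
    (is "_ \<in> ?Q \<rightarrow>\<^sub>M _")
proof (rule Xvec_measurable_wrt)
  have "(\<Union>i\<in>{1..k}. generated_events i) \<subseteq> Pow (space M)"
    using generated_events_subset sets.space_closed by blast
  then have sets_Q: "sets ?Q = sigma_sets (space M) (\<Union>i\<in>{1..k}. generated_events i)"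
    by simp
  have gen_Q: "generated_events i \<subseteq> sets ?Q" if "i \<in> {1..k}" for i
    unfolding sets_Q using that by (blast intro: sigma_sets.Basic)
  have "X 1 -` A \<inter> space M \<in> sets ?Q" if "A \<in> sets borel" for A
    using gen_Q[of 1] assms that unfolding generated_events_X1 by auto
  then show "X 1 \<in> borel_measurable ?Q"
    by (intro measurableI) (simp_all add: space_measure_of_conv)
  fix i assume i: "2 \<le> i" "i \<le> k"
  then have "\<epsilon> i -` A \<inter> space M \<in> sets ?Q" if "A \<in> sets borel" for A
    using gen_Q[of i] that generated_events_eps[of i] by auto
  then show "\<epsilon> i \<in> borel_measurable ?Q"
    by (intro measurableI) (simp_all add: space_measure_of_conv)
qed

lemma indep_Xvec_eps:
  assumes "1 \<le> k"
  shows "indep_set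
      (sigma_sets (space M) {Xvec X k -` A \<inter> space M |A. A \<in> sets (PiM {1..k} (\<lambda>_. borel))})
      (sigma_sets (space M) {\<epsilon> (Suc k) -` A \<inter> space M |A. A \<in> sets (borel :: 'y measure)})"
proof -
  define I where "I b = (if b then {1..k} else {Suc k})" for b
  have indep: "indep_sets (\<lambda>b. sigma_sets (space M) (\<Union>i\<in>I b. generated_events i)) UNIV"
  proof (rule indep_sets_collect_sigma)
    show "indep_sets generated_events (\<Union>b. I b)"
      by (rule indep_sets_mono_index[OF _ indep_generated_events]) (auto simp: I_def)
    show "Int_stable (generated_events i)" for i
      unfolding generated_events_def by (simp add: sets.Int_stable)
    show "disjoint_family_on I UNIV"
      by (auto simp: disjoint_family_on_def I_def)
  qed
  have "{Xvec X k -` A \<inter> space M |A. A \<in> sets (PiM {1..k} (\<lambda>_. borel))}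
      \<subseteq> sets (sigma (space M) (\<Union>i\<in>{1..k}. generated_events i))"
    using measurable_sets[OF Xvec_measurable_generated[OF assms]] by (auto simp: space_measure_of_conv)
  moreover have "(\<Union>i\<in>{1..k}. generated_events i) \<subseteq> Pow (space M)"
    using generated_events_subset sets.space_closed by blast
  ultimately have "sigma_sets (space M) {Xvec X k -` A \<inter> space M |A. A \<in> sets (PiM {1..k} (\<lambda>_. borel))}
      \<subseteq> sigma_sets (space M) (\<Union>i\<in>I True. generated_events i)"
    by (intro sigma_sets_mono) (simp add: I_def)
  moreover have "sigma_sets (space M) {\<epsilon> (Suc k) -` A \<inter> space M |A. A \<in> sets (borel :: 'y measure)}
      = sigma_sets (space M) (\<Union>i\<in>I False. generated_events i)"
    using assms by (simp add: I_def generated_events_eps)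
  ultimately show ?thesis
    unfolding indep_set_def
    by (intro indep_sets_mono_sets[OF indep]) (simp split: bool.split)
qed

lemma law_Xvec_eps:
  assumes "1 \<le> k"
  shows "distr M (PiM {1..k} (\<lambda>_. borel) \<Otimes>\<^sub>M borel) (\<lambda>\<omega>. (Xvec X k \<omega>, \<epsilon> (Suc k) \<omega>))
    = law_Xvec k \<Otimes>\<^sub>M law_eps"
proof -
  let ?Z = "\<lambda>\<omega>. (Xvec X k \<omega>, \<epsilon> (Suc k) \<omega>)"
  let ?E = "distr M borel (\<epsilon> (Suc k))"
  have Z: "?Z \<in> M \<rightarrow>\<^sub>M PiM {1..k} (\<lambda>_. borel) \<Otimes>\<^sub>M borel"
    by (intro measurable_Pair Xvec_measurable eps_meas)
  have "law_Xvec k \<Otimes>\<^sub>M ?E = distr M (PiM {1..k} (\<lambda>_. borel) \<Otimes>\<^sub>M borel) ?Z"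
  proof (rule pair_measure_eqI)
    show "sigma_finite_measure (law_Xvec k)" "sigma_finite_measure ?E"
      using Xvec_measurable eps_meas by (auto intro!: prob_space_imp_sigma_finite prob_space_distr)
    show "sets (law_Xvec k \<Otimes>\<^sub>M ?E) = sets (distr M (PiM {1..k} (\<lambda>_. borel) \<Otimes>\<^sub>M borel) ?Z)"
      unfolding sets_distr by (rule sets_pair_measure_cong) simp_all
  next
    fix A B assume "A \<in> sets (law_Xvec k)" "B \<in> sets ?E"
    then have A: "A \<in> sets (PiM {1..k} (\<lambda>_. (borel :: 'x measure)))" and B: "B \<in> sets (borel :: 'y measure)"
      by simp_all
    have "?Z -` (A \<times> B) \<inter> space M = (Xvec X k -` A \<inter> space M) \<inter> (\<epsilon> (Suc k) -` B \<inter> space M)"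
      by auto
    moreover have "prob ((Xvec X k -` A \<inter> space M) \<inter> (\<epsilon> (Suc k) -` B \<inter> space M))
        = prob (Xvec X k -` A \<inter> space M) * prob (\<epsilon> (Suc k) -` B \<inter> space M)"
      using A B by (intro indep_setD[OF indep_Xvec_eps[OF assms]]) (auto intro: sigma_sets.Basic)
    ultimately have "emeasure M (?Z -` (A \<times> B) \<inter> space M)
        = emeasure M (Xvec X k -` A \<inter> space M) * emeasure M (\<epsilon> (Suc k) -` B \<inter> space M)"
      by (simp add: emeasure_eq_measure ennreal_mult')
    moreover have "emeasure (distr M (PiM {1..k} (\<lambda>_. borel) \<Otimes>\<^sub>M borel) ?Z) (A \<times> B)
        = emeasure M (?Z -` (A \<times> B) \<inter> space M)"
      using A B by (intro emeasure_distr[OF Z]) (rule pair_measureI)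
    moreover have "emeasure (law_Xvec k) A = emeasure M (Xvec X k -` A \<inter> space M)"
      using A by (rule emeasure_distr[OF Xvec_measurable])
    moreover have "emeasure ?E B = emeasure M (\<epsilon> (Suc k) -` B \<inter> space M)"
      using B by (rule emeasure_distr[OF eps_meas])
    ultimately show "emeasure (law_Xvec k) A * emeasure ?E B
        = emeasure (distr M (PiM {1..k} (\<lambda>_. borel) \<Otimes>\<^sub>M borel) ?Z) (A \<times> B)"
      by simp
  qed
  then show ?thesis
    using eps_ident[of "Suc k"] by simp
qed

section \<open>The conditional expectations \<open>g\<^sub>k\<close>\<close>

definition extend :: "nat \<Rightarrow> (nat \<Rightarrow> 'x) \<Rightarrow> 'y \<Rightarrow> (nat \<Rightarrow> 'x)" where
  "extend k x y = x(Suc k := F (Suc k) (x k) y)"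

text \<open>\<open>cond_fn_from_top j\<close> is \<open>g\<^sub>n\<^sub>-\<^sub>j\<close>; the constant \<open>g\<^sub>0\<close> integrates \<open>g\<^sub>1\<close> against the law
  of \<open>X\<^sub>1\<close>.\<close>
primrec cond_fn_from_top :: "nat \<Rightarrow> (nat \<Rightarrow> 'x) \<Rightarrow> real^'d" where
  "cond_fn_from_top 0 = f"
| "cond_fn_from_top (Suc j) = (\<lambda>x. \<integral>y. cond_fn_from_top j (extend (n - Suc j) x y) \<partial>law_eps)"

definition cond_fn :: "nat \<Rightarrow> (nat \<Rightarrow> 'x) \<Rightarrow> real^'d" where
  "cond_fn k = (if k = 0 then (\<lambda>_. \<integral>z. cond_fn_from_top (n - 1) (\<lambda>i\<in>{1..1}. z) \<partial>law_X1)
     else cond_fn_from_top (n - k))"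

lemma cond_fn_top: "cond_fn n = f"
  using n2 by (simp add: cond_fn_def)

lemma cond_fn_step:
  assumes "1 \<le> k" "k < n"
  shows "cond_fn k = (\<lambda>x. \<integral>y. cond_fn (Suc k) (extend k x y) \<partial>law_eps)"
proof -
  have "n - k = Suc (n - Suc k)" "n - Suc (n - Suc k) = k"
    using assms by simp_all
  with assms show ?thesis by (simp add: cond_fn_def)
qed

lemma cond_fn_0: "cond_fn 0 x = (\<integral>z. cond_fn 1 (\<lambda>i\<in>{1..1}. z) \<partial>law_X1)"
  by (simp add: cond_fn_def)

lemma extend_space:
  "x \<in> space (PiM {1..k} (\<lambda>_. borel)) \<Longrightarrow> extend k x y \<in> space (PiM {1..Suc k} (\<lambda>_. borel))"
  unfolding extend_def space_PiM PiE_iff extensional_def by auto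

lemma Xvec_Suc: "1 \<le> k \<Longrightarrow> Xvec X (Suc k) \<omega> = extend k (Xvec X k \<omega>) (\<epsilon> (Suc k) \<omega>)"
  using X_rec[of "Suc k" \<omega>] by (auto simp: Xvec_def extend_def fun_eq_iff)

lemma measurable_extend:
  assumes "1 \<le> k"
  shows "(\<lambda>p. extend k (fst p) (snd p))
    \<in> PiM {1..k} (\<lambda>_. borel) \<Otimes>\<^sub>M borel \<rightarrow>\<^sub>M PiM {1..Suc k} (\<lambda>_. borel)"
proof -
  let ?E = "\<lambda>p. \<lambda>i\<in>{1..Suc k}. if i = Suc k then F (Suc k) (fst p k) (snd p) else fst p i"
  have "(\<lambda>p. (fst p k, snd p)) \<in> PiM {1..k} (\<lambda>_. borel) \<Otimes>\<^sub>M borel \<rightarrow>\<^sub>M borel \<Otimes>\<^sub>M borel"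
    using assms by (intro measurable_Pair measurable_compose[OF measurable_fst
        measurable_component_singleton] measurable_snd) auto
  from measurable_compose[OF this F_meas[of "Suc k"]]
  have last: "(\<lambda>p. F (Suc k) (fst p k) (snd p)) \<in> PiM {1..k} (\<lambda>_. borel) \<Otimes>\<^sub>M borel \<rightarrow>\<^sub>M borel"
    using assms by simp
  have "?E \<in> PiM {1..k} (\<lambda>_. borel) \<Otimes>\<^sub>M borel \<rightarrow>\<^sub>M PiM {1..Suc k} (\<lambda>_. borel)"
  proof (rule measurable_restrict)
    fix i assume "i \<in> {1..Suc k}"
    then have "(\<lambda>p. fst p i) \<in> PiM {1..k} (\<lambda>_. borel) \<Otimes>\<^sub>M borel \<rightarrow>\<^sub>M borel" if "i \<noteq> Suc k"
      using that by (intro measurable_compose[OF measurable_fst measurable_component_singleton]) auto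
    with last show "(\<lambda>p. if i = Suc k then F (Suc k) (fst p k) (snd p) else fst p i)
        \<in> PiM {1..k} (\<lambda>_. borel) \<Otimes>\<^sub>M borel \<rightarrow>\<^sub>M borel"
      by (cases "i = Suc k") simp_all
  qed
  moreover have "extend k (fst p) (snd p) = ?E p"
    if "p \<in> space (PiM {1..k} (\<lambda>_. (borel :: 'x measure)) \<Otimes>\<^sub>M (borel :: 'y measure))" for p
    using that unfolding space_pair_measure space_PiM extend_def
    by (auto simp: fun_eq_iff PiE_iff extensional_def)
  ultimately show ?thesis
    by (subst measurable_cong) auto
qed

lemma measurable_F_section: "2 \<le> m \<Longrightarrow> F m x \<in> borel_measurable borel"
  using measurable_compose[OF _ F_meas, of "\<lambda>y. (x, y)" borel m] by simp

lemma nn_integral_dist_F_le: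
  "2 \<le> m \<Longrightarrow> (\<integral>\<^sup>+y. ennreal (dist (F m x y) (F m x' y)) \<partial>law_eps) \<le> ennreal (\<rho> m * dist x x')"
  using C1[of m] measurable_F_section[of m x] measurable_F_section[of m x'] eps_meas
  by (simp add: nn_integral_distr)

lemma measurable_dist_F: "2 \<le> m \<Longrightarrow> (\<lambda>y. dist (F m x y) (F m x' y)) \<in> borel_measurable borel"
  using measurable_F_section[of m x] measurable_F_section[of m x'] by simp

lemma integrable_dist_F: "2 \<le> m \<Longrightarrow> integrable law_eps (\<lambda>y. dist (F m x y) (F m x' y))"
  using nn_integral_dist_F_le[of m x x'] measurable_dist_F[of m x x']
  by (intro integrableI_bounded) (auto simp: top.not_eq_extremum intro: le_less_trans)

lemma coordwise_lipschitz_extend: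
  assumes "coordwise_lipschitz N (Suc k) K g"
    and "x \<in> space (PiM {1..k} (\<lambda>_. borel))" "x' \<in> space (PiM {1..k} (\<lambda>_. borel))"
  shows "N (g (extend k x y) - g (extend k x' y'))
    \<le> (\<Sum>i=1..k. dist (x i) (x' i)) + K * dist (F (Suc k) (x k) y) (F (Suc k) (x' k) y')"
proof -
  have "N (g (extend k x y) - g (extend k x' y'))
    \<le> (\<Sum>i\<in>{1..<Suc k}. dist (extend k x y i) (extend k x' y' i))
      + K * dist (extend k x y (Suc k)) (extend k x' y' (Suc k))"
    using assms unfolding coordwise_lipschitz_def by (blast intro: extend_space)
  also have "(\<Sum>i\<in>{1..<Suc k}. dist (extend k x y i) (extend k x' y' i)) = (\<Sum>i=1..k. dist (x i) (x' i))"
    by (intro sum.cong) (auto simp: extend_def)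
  also have "dist (extend k x y (Suc k)) (extend k x' y' (Suc k))
      = dist (F (Suc k) (x k) y) (F (Suc k) (x' k) y')"
    by (simp add: extend_def)
  finally show ?thesis .
qed

definition regular_level :: "nat \<Rightarrow> bool" where
  "regular_level k \<longleftrightarrow> cond_fn k \<in> borel_measurable (PiM {1..k} (\<lambda>_. borel)) \<and>
     coordwise_lipschitz N k (Kc \<rho> k n) (cond_fn k) \<and> integrable M (\<lambda>\<omega>. cond_fn k (Xvec X k \<omega>))"

lemma regular_level_top: "regular_level n"
proof -
  have "coordwise_lipschitz N n (Kc \<rho> n n) f"
    unfolding coordwise_lipschitz_def
  proof (intro ballI)
    fix x x' :: "nat \<Rightarrow> 'x"
    assume x: "x \<in> space (PiM {1..n} (\<lambda>_. borel))" and x': "x' \<in> space (PiM {1..n} (\<lambda>_. borel))"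
    have "{1..n} = insert n {1..<n}" using n2 by auto
    then have "(\<Sum>i=1..n. dist (x i) (x' i)) = (\<Sum>i\<in>{1..<n}. dist (x i) (x' i)) + dist (x n) (x' n)"
      by simp
    with f_lip[OF x x'] show "N (f x - f x') \<le> (\<Sum>i\<in>{1..<n}. dist (x i) (x' i)) + Kc \<rho> n n * dist (x n) (x' n)"
      by simp
  qed
  then show ?thesis
    unfolding regular_level_def cond_fn_top using f_meas f_int by blast
qed
context
  fixes k :: nat
  assumes k: "1 \<le> k" "k < n"
    and regular_Suc: "regular_level (Suc k)"
begin

lemma coordwise_lipschitz_next: "coordwise_lipschitz N (Suc k) (Kc \<rho> (Suc k) n) (cond_fn (Suc k))"
  using regular_Suc unfolding regular_level_def by blast

lemma measurable_cond_fn_extend: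
  "(\<lambda>p. cond_fn (Suc k) (extend k (fst p) (snd p))) \<in> borel_measurable (PiM {1..k} (\<lambda>_. borel) \<Otimes>\<^sub>M borel)"
proof -
  have "cond_fn (Suc k) \<in> borel_measurable (PiM {1..Suc k} (\<lambda>_. borel))"
    using regular_Suc unfolding regular_level_def by blast
  from measurable_comp[OF measurable_extend[OF k(1)] this] show ?thesis
    by (simp add: comp_def)
qed

lemma integrable_cond_fn_extend:
  "integrable (law_Xvec k \<Otimes>\<^sub>M law_eps) (\<lambda>p. cond_fn (Suc k) (extend k (fst p) (snd p)))"
proof -
  have Z: "(\<lambda>\<omega>. (Xvec X k \<omega>, \<epsilon> (Suc k) \<omega>)) \<in> M \<rightarrow>\<^sub>M PiM {1..k} (\<lambda>_. borel) \<Otimes>\<^sub>M borel"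
    by (intro measurable_Pair Xvec_measurable eps_meas)
  show ?thesis
    unfolding law_Xvec_eps[OF k(1), symmetric] integrable_distr_eq[OF Z measurable_cond_fn_extend]
    using regular_Suc k(1) by (simp add: regular_level_def Xvec_Suc)
qed

lemma ex_integrable_section:
  "\<exists>x0\<in>space (PiM {1..k} (\<lambda>_. borel)). integrable law_eps (\<lambda>y. cond_fn (Suc k) (extend k x0 y))"
proof (rule ccontr)
  interpret pair_sigma_finite "law_Xvec k" law_eps
    by (rule pair_sigma_finite_laws)
  assume none: "\<not> ?thesis"
  have "AE x in law_Xvec k. integrable law_eps (\<lambda>y. cond_fn (Suc k) (extend k x y))"
    using AE_integrable_fst'[OF integrable_cond_fn_extend] by simp
  then have "AE x in law_Xvec k. False"
    by (rule AE_mp) (rule AE_I2, use none in auto)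
  then show False
    using prob_space.AE_False[OF prob_space_distr[OF Xvec_measurable]] by simp
qed

text \<open>The Lipschitz bound and the integrability of the contraction term in (C1) carry
  integrability over from one section to all of them.\<close>
lemma integrable_cond_fn_extend_section:
  assumes x: "x \<in> space (PiM {1..k} (\<lambda>_. borel))"
  shows "integrable law_eps (\<lambda>y. cond_fn (Suc k) (extend k x y))"
proof -
  let ?\<psi> = "\<lambda>x y. cond_fn (Suc k) (extend k x y)"
  obtain x0 where x0: "x0 \<in> space (PiM {1..k} (\<lambda>_. borel))" "integrable law_eps (?\<psi> x0)"
    using ex_integrable_section by blast
  obtain c where "0 < c" and c: "\<And>v. norm v \<le> c * N v"
    using norm_le_is_norm[OF N_norm] by blast
  define S where "S = (\<Sum>i=1..k. dist (x i) (x0 i))"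
  define K where "K = Kc \<rho> (Suc k) n"
  define d where "d y = dist (F (Suc k) (x k) y) (F (Suc k) (x0 k) y)" for y
  define bound where "bound y = norm (?\<psi> x0 y) + c * (S + K * d y)" for y
  have "0 \<le> S" "0 \<le> K"
    using Kc_rho_nonneg[of "Suc k"] by (simp_all add: S_def K_def sum_nonneg)
  have bounded: "norm (?\<psi> x y) \<le> norm (bound y)" for y
  proof -
    have "N (?\<psi> x y - ?\<psi> x0 y) \<le> S + K * d y"
      unfolding S_def K_def d_def by (rule coordwise_lipschitz_extend[OF coordwise_lipschitz_next x x0(1)])
    then have "c * N (?\<psi> x y - ?\<psi> x0 y) \<le> c * (S + K * d y)"
      using \<open>0 < c\<close> by simp
    then have "norm (?\<psi> x y) \<le> bound y"
      using norm_triangle_sub[of "?\<psi> x y" "?\<psi> x0 y"] c[of "?\<psi> x y - ?\<psi> x0 y"]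
      unfolding bound_def by linarith
    moreover have "0 \<le> bound y"
      using \<open>0 < c\<close> \<open>0 \<le> S\<close> \<open>0 \<le> K\<close> by (simp add: bound_def d_def)
    ultimately show ?thesis by simp
  qed
  have "integrable law_eps bound"
  proof -
    have "integrable law_eps d"
      unfolding d_def using k by (intro integrable_dist_F) simp
    moreover have "integrable law_eps (\<lambda>_. S)"
      using prob_space.finite_measure[OF prob_space_law_eps] by (rule finite_measure.integrable_const)
    ultimately show ?thesis
      unfolding bound_def using x0(2) by simp
  qed
  moreover have "?\<psi> x \<in> borel_measurable law_eps"
    using measurable_comp[OF measurable_Pair1'[OF x] measurable_cond_fn_extend] by (simp add: comp_def)
  ultimately show ?thesis
    by (rule Bochner_Integration.integrable_bound) (use bounded in \<open>simp del: real_norm_def\<close>)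
qed

lemma measurable_cond_fn_step: "cond_fn k \<in> borel_measurable (PiM {1..k} (\<lambda>_. borel))"
proof -
  have "sets (PiM {1..k} (\<lambda>_. borel) \<Otimes>\<^sub>M law_eps) = sets (PiM {1..k} (\<lambda>_. borel) \<Otimes>\<^sub>M borel)"
    by (rule sets_pair_measure_cong) simp_all
  then have "(\<lambda>(x, y). cond_fn (Suc k) (extend k x y)) \<in> borel_measurable (PiM {1..k} (\<lambda>_. borel) \<Otimes>\<^sub>M law_eps)"
    using measurable_cond_fn_extend measurable_cong_sets[OF _ refl] by (simp add: case_prod_beta')
  from sigma_finite_measure.borel_measurable_lebesgue_integral[OF _ this]
  show ?thesis
    using cond_fn_step[OF k] prob_space_law_eps by (simp add: prob_space_imp_sigma_finite)
qed

lemma coordwise_lipschitz_cond_fn_step: "coordwise_lipschitz N k (Kc \<rho> k n) (cond_fn k)"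
  unfolding coordwise_lipschitz_def
proof (intro ballI)
  fix x x' :: "nat \<Rightarrow> 'x"
  assume x: "x \<in> space (PiM {1..k} (\<lambda>_. borel))" and x': "x' \<in> space (PiM {1..k} (\<lambda>_. borel))"
  define S where "S = (\<Sum>i\<in>{1..<k}. dist (x i) (x' i)) + dist (x k) (x' k)"
  define K where "K = Kc \<rho> (Suc k) n"
  have "0 \<le> S" "0 \<le> K" "0 \<le> \<rho> (Suc k)"
    using Kc_rho_nonneg[of "Suc k"] rho_nonneg[of "Suc k"] k by (simp_all add: S_def K_def sum_nonneg)
  have "{1..k} = insert k {1..<k}" using k by auto
  then have "N (cond_fn (Suc k) (extend k x y) - cond_fn (Suc k) (extend k x' y))
      \<le> K * dist (F (Suc k) (x k) y) (F (Suc k) (x' k) y) + S" for y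
    using coordwise_lipschitz_extend[OF coordwise_lipschitz_next x x', of y y]
    by (simp add: S_def K_def add_ac)
  then have "ennreal (N ((\<integral>y. cond_fn (Suc k) (extend k x y) \<partial>law_eps)
      - (\<integral>y. cond_fn (Suc k) (extend k x' y) \<partial>law_eps)))
      \<le> ennreal K * (\<integral>\<^sup>+y. ennreal (dist (F (Suc k) (x k) y) (F (Suc k) (x' k) y)) \<partial>law_eps) + ennreal S"
    using \<open>0 \<le> S\<close> \<open>0 \<le> K\<close> k measurable_dist_F[of "Suc k" "x k" "x' k"]
    by (intro prob_space.jensen_integral_diff_le[OF prob_space_law_eps N_jensen_eps
        integrable_cond_fn_extend_section[OF x] integrable_cond_fn_extend_section[OF x']]) auto
  also have "\<dots> \<le> ennreal K * ennreal (\<rho> (Suc k) * dist (x k) (x' k)) + ennreal S"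
    using nn_integral_dist_F_le[of "Suc k"] k by (intro add_right_mono mult_left_mono) auto
  also have "\<dots> = ennreal (K * (\<rho> (Suc k) * dist (x k) (x' k)) + S)"
    using \<open>0 \<le> S\<close> \<open>0 \<le> K\<close> \<open>0 \<le> \<rho> (Suc k)\<close> by (simp add: ennreal_plus ennreal_mult)
  finally have "N (cond_fn k x - cond_fn k x') \<le> K * (\<rho> (Suc k) * dist (x k) (x' k)) + S"
    unfolding cond_fn_step[OF k]
    using \<open>0 \<le> S\<close> \<open>0 \<le> K\<close> \<open>0 \<le> \<rho> (Suc k)\<close> by (simp del: ennreal_plus)
  then show "N (cond_fn k x - cond_fn k x') \<le> (\<Sum>i\<in>{1..<k}. dist (x i) (x' i)) + Kc \<rho> k n * dist (x k) (x' k)"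
    by (simp add: Kc_unfold[OF k(2)] S_def K_def algebra_simps)
qed

lemma integrable_cond_fn_step: "integrable M (\<lambda>\<omega>. cond_fn k (Xvec X k \<omega>))"
proof -
  interpret pair_sigma_finite "law_Xvec k" law_eps
    by (rule pair_sigma_finite_laws)
  have "integrable (law_Xvec k) (cond_fn k)"
    using integrable_fst'[OF integrable_cond_fn_extend] cond_fn_step[OF k] by simp
  then show ?thesis
    using integrable_distr_eq[OF Xvec_measurable measurable_cond_fn_step] by simp
qed

lemma regular_level_step: "regular_level k"
  unfolding regular_level_def
  using measurable_cond_fn_step coordwise_lipschitz_cond_fn_step integrable_cond_fn_step by blast

lemma set_integral_cond_fn_step:
  assumes B: "B \<in> sets (PiM {1..k} (\<lambda>_. borel))"
  shows "(\<integral>\<omega>. indicator B (Xvec X k \<omega>) *\<^sub>R cond_fn k (Xvec X k \<omega>) \<partial>M)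
    = (\<integral>\<omega>. indicator B (Xvec X k \<omega>) *\<^sub>R cond_fn (Suc k) (Xvec X (Suc k) \<omega>) \<partial>M)"
proof -
  interpret pair_sigma_finite "law_Xvec k" law_eps
    by (rule pair_sigma_finite_laws)
  define \<phi> where "\<phi> p = indicator B (fst p) *\<^sub>R cond_fn (Suc k) (extend k (fst p) (snd p))" for p
  have Z: "(\<lambda>\<omega>. (Xvec X k \<omega>, \<epsilon> (Suc k) \<omega>)) \<in> M \<rightarrow>\<^sub>M PiM {1..k} (\<lambda>_. borel) \<Otimes>\<^sub>M borel"
    by (intro measurable_Pair Xvec_measurable eps_meas)
  have \<phi>_meas: "\<phi> \<in> borel_measurable (PiM {1..k} (\<lambda>_. borel) \<Otimes>\<^sub>M borel)"
    unfolding \<phi>_def using measurable_cond_fn_extend B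
    by (intro borel_measurable_scaleR borel_measurable_indicator measurable_compose[OF measurable_fst]) auto
  have "indicator B (fst p) = (indicator (B \<times> space law_eps) p :: real)" for p
    by (cases p) (simp add: indicator_def)
  then have \<phi>_int: "integrable (law_Xvec k \<Otimes>\<^sub>M law_eps) \<phi>"
    unfolding \<phi>_def using B integrable_cond_fn_extend by (simp add: integrable_mult_indicator pair_measureI)
  have "(\<integral>\<omega>. indicator B (Xvec X k \<omega>) *\<^sub>R cond_fn k (Xvec X k \<omega>) \<partial>M)
      = (\<integral>x. indicator B x *\<^sub>R cond_fn k x \<partial>law_Xvec k)"
    using measurable_cond_fn_step B
    by (intro integral_distr[OF Xvec_measurable, symmetric] borel_measurable_scaleR borel_measurable_indicator)
  also have "\<dots> = (\<integral>x. (\<integral>y. \<phi> (x, y) \<partial>law_eps) \<partial>law_Xvec k)"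
    unfolding \<phi>_def by (simp add: cond_fn_step[OF k])
  also have "\<dots> = (\<integral>p. \<phi> p \<partial>(law_Xvec k \<Otimes>\<^sub>M law_eps))"
    by (rule integral_fst'[OF \<phi>_int])
  also have "\<dots> = (\<integral>\<omega>. \<phi> (Xvec X k \<omega>, \<epsilon> (Suc k) \<omega>) \<partial>M)"
    unfolding law_Xvec_eps[OF k(1), symmetric] by (rule integral_distr[OF Z \<phi>_meas])
  finally show ?thesis
    by (simp add: \<phi>_def Xvec_Suc[OF k(1)])
qed

end

lemma regular_level:
  assumes "1 \<le> k" "k \<le> n"
  shows "regular_level k"
  using assms
proof (induction "n - k" arbitrary: k)
  case (Suc d)
  then have "k < n" "regular_level (Suc k)" by simp_all
  with Suc.prems(1) show ?case by (rule regular_level_step)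
qed (simp add: regular_level_top)

lemma set_integral_cond_fn:
  assumes "1 \<le> k" "k \<le> n" "B \<in> sets (PiM {1..k} (\<lambda>_. borel))"
  shows "(\<integral>\<omega>. indicator B (Xvec X k \<omega>) *\<^sub>R cond_fn k (Xvec X k \<omega>) \<partial>M)
    = (\<integral>\<omega>. indicator B (Xvec X k \<omega>) *\<^sub>R f (Xvec X n \<omega>) \<partial>M)"
  using assms
proof (induction "n - k" arbitrary: k B)
  case 0
  then have "k = n" by simp
  then show ?case by (simp add: cond_fn_top)
next
  case (Suc d)
  then have k: "1 \<le> k" "k < n" by simp_all
  define B' where "B' = (\<lambda>x. restrict x {1..k}) -` B \<inter> space (PiM {1..Suc k} (\<lambda>_. (borel :: 'x measure)))"
  have "(\<lambda>x. restrict x {1..k}) \<in> PiM {1..Suc k} (\<lambda>_. borel) \<rightarrow>\<^sub>M PiM {1..k} (\<lambda>_. (borel :: 'x measure))"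
    by (rule measurable_restrict_subset) auto
  from measurable_sets[OF this Suc.prems(3)]
  have B': "B' \<in> sets (PiM {1..Suc k} (\<lambda>_. borel))" unfolding B'_def .
  have "restrict (Xvec X (Suc k) \<omega>) {1..k} = Xvec X k \<omega>" for \<omega>
    by (auto simp: Xvec_def fun_eq_iff)
  then have B'_B: "indicator B' (Xvec X (Suc k) \<omega>) = (indicator B (Xvec X k \<omega>) :: real)" for \<omega>
    using Xvec_space[of "Suc k" \<omega>] by (simp add: B'_def indicator_def)
  have "(\<integral>\<omega>. indicator B (Xvec X k \<omega>) *\<^sub>R cond_fn k (Xvec X k \<omega>) \<partial>M)
      = (\<integral>\<omega>. indicator B' (Xvec X (Suc k) \<omega>) *\<^sub>R cond_fn (Suc k) (Xvec X (Suc k) \<omega>) \<partial>M)"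
    using set_integral_cond_fn_step[OF k regular_level[of "Suc k"] Suc.prems(3)] k
    by (simp add: B'_B)
  also have "\<dots> = (\<integral>\<omega>. indicator B' (Xvec X (Suc k) \<omega>) *\<^sub>R f (Xvec X n \<omega>) \<partial>M)"
    using Suc.hyps(1)[of "Suc k" B'] Suc.hyps(2) k B' by simp
  finally show ?case by (simp add: B'_B)
qed

lemma Xvec_1: "Xvec X 1 \<omega> = (\<lambda>i\<in>{1..1}. X 1 \<omega>)"
  by (auto simp: Xvec_def)

lemma measurable_cond_fn_1:
  "(\<lambda>z. cond_fn 1 (\<lambda>i\<in>{1..1}. z)) \<in> borel_measurable (borel :: 'x measure)"
proof -
  have "(\<lambda>z. \<lambda>i\<in>{1..1::nat}. z) \<in> (borel :: 'x measure) \<rightarrow>\<^sub>M PiM {1..1} (\<lambda>_. borel)"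
    by (rule measurable_restrict) simp
  moreover have "cond_fn 1 \<in> borel_measurable (PiM {1..1} (\<lambda>_. borel))"
    using regular_level[of 1] n2 unfolding regular_level_def by simp
  ultimately show ?thesis
    using measurable_comp by (auto simp: comp_def)
qed

lemma integrable_cond_fn_1: "integrable law_X1 (\<lambda>z. cond_fn 1 (\<lambda>i\<in>{1..1}. z))"
proof -
  have "regular_level 1" using n2 by (intro regular_level) auto
  then have "integrable M (\<lambda>\<omega>. cond_fn 1 (Xvec X 1 \<omega>))"
    unfolding regular_level_def by blast
  then show ?thesis
    unfolding integrable_distr_eq[OF X1_meas measurable_cond_fn_1] Xvec_1 .
qed

lemma cond_fn_0_eq_expectation: "cond_fn 0 = (\<lambda>_. \<integral>\<omega>. f (Xvec X n \<omega>) \<partial>M)"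
proof (rule ext)
  fix x
  have "cond_fn 0 x = (\<integral>\<omega>. cond_fn 1 (Xvec X 1 \<omega>) \<partial>M)"
    unfolding cond_fn_0 Xvec_1 by (rule integral_distr[OF X1_meas measurable_cond_fn_1])
  also have "\<dots> = (\<integral>\<omega>. indicator (space (PiM {1..1} (\<lambda>_. borel))) (Xvec X 1 \<omega>) *\<^sub>R cond_fn 1 (Xvec X 1 \<omega>) \<partial>M)"
    using Xvec_space[of 1] by simp
  also have "\<dots> = (\<integral>\<omega>. indicator (space (PiM {1..1} (\<lambda>_. borel))) (Xvec X 1 \<omega>) *\<^sub>R f (Xvec X n \<omega>) \<partial>M)"
    using n2 by (intro set_integral_cond_fn) auto
  also have "\<dots> = (\<integral>\<omega>. f (Xvec X n \<omega>) \<partial>M)"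
    using Xvec_space[of 1] by simp
  finally show "cond_fn 0 x = (\<integral>\<omega>. f (Xvec X n \<omega>) \<partial>M)" .
qed

lemma measurable_cond_fn: "k \<le> n \<Longrightarrow> cond_fn k \<in> borel_measurable (PiM {1..k} (\<lambda>_. borel))"
  using regular_level[of k] cond_fn_0_eq_expectation
  by (cases "k = 0") (simp_all add: regular_level_def)

lemma set_lebesgue_integral_Xvec:
  "(LINT \<omega>:Xvec X k -` B \<inter> space M|M. h \<omega>) = (\<integral>\<omega>. indicator B (Xvec X k \<omega>) *\<^sub>R h \<omega> \<partial>M)"
  unfolding set_lebesgue_integral_def
  by (intro Bochner_Integration.integral_cong) (auto simp: indicator_def)

lemma cond_exp_version_cond_fn:
  assumes "k \<le> n"
  shows "is_cond_exp_version M (Filt M X k) (\<lambda>\<omega>. f (Xvec X n \<omega>)) (\<lambda>\<omega>. cond_fn k (Xvec X k \<omega>))"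
  unfolding is_cond_exp_version_def
proof (intro conjI ballI)
  have "Xvec X k \<in> Filt M X k \<rightarrow>\<^sub>M PiM {1..k} (\<lambda>_. borel)"
    unfolding Filt_def by (rule measurable_vimage_algebra1) (use Xvec_space in auto)
  from measurable_comp[OF this measurable_cond_fn[OF assms]]
  show "(\<lambda>\<omega>. cond_fn k (Xvec X k \<omega>)) \<in> borel_measurable (Filt M X k)"
    by (simp add: comp_def)
  show "integrable M (\<lambda>\<omega>. cond_fn k (Xvec X k \<omega>))"
    using regular_level[of k] assms cond_fn_0_eq_expectation
    by (cases "k = 0") (simp_all add: regular_level_def)
  fix A assume "A \<in> sets (Filt M X k)"
  then obtain B where B: "B \<in> sets (PiM {1..k} (\<lambda>_. borel))" "A = Xvec X k -` B \<inter> space M"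
    unfolding Filt_def using Xvec_space by (auto simp: sets_vimage_algebra2 Pi_iff)
  show "(LINT \<omega>:A|M. cond_fn k (Xvec X k \<omega>)) = (LINT \<omega>:A|M. f (Xvec X n \<omega>))"
  proof (cases "k = 0")
    case True
    have "Xvec X 0 \<omega> = (\<lambda>_. undefined)" for \<omega>
      by (simp add: Xvec_def fun_eq_iff)
    then show ?thesis
      unfolding B(2) set_lebesgue_integral_Xvec True cond_fn_0_eq_expectation by (simp add: prob_space)
  next
    case False
    then show ?thesis
      unfolding B(2) set_lebesgue_integral_Xvec using assms B(1)
      by (intro set_integral_cond_fn) auto
  qed
qed

lemma martingale_diff_1_le:
  "ennreal (N (cond_fn 1 (Xvec X 1 \<omega>) - cond_fn 0 (Xvec X 0 \<omega>)))
    \<le> ennreal (Kc \<rho> 1 n) * (\<integral>\<^sup>+x'. ennreal (dist (X 1 \<omega>) x') \<partial>law_X1)"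
proof -
  have lip: "coordwise_lipschitz N 1 (Kc \<rho> 1 n) (cond_fn 1)"
    using regular_level[of 1] n2 by (simp add: regular_level_def)
  have point: "(\<lambda>i\<in>{1..1}. z) \<in> space (PiM {1..1} (\<lambda>_. borel))" for z :: 'x
    by (simp add: space_PiM)
  have "N (cond_fn 1 (\<lambda>i\<in>{1..1}. X 1 \<omega>) - cond_fn 1 (\<lambda>i\<in>{1..1}. z)) \<le> Kc \<rho> 1 n * dist (X 1 \<omega>) z" for z
    using lip point[of "X 1 \<omega>"] point[of z] unfolding coordwise_lipschitz_def by fastforce
  then show ?thesis
    unfolding Xvec_1 cond_fn_0 using Kc_rho_nonneg[of 1]
    by (intro prob_space.jensen_deviation_le[OF prob_space_law_X1 N_jensen_X1 integrable_cond_fn_1]) auto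
qed

lemma martingale_diff_Suc_le:
  assumes j: "1 \<le> j" "j < n"
  shows "ennreal (N (cond_fn (Suc j) (Xvec X (Suc j) \<omega>) - cond_fn j (Xvec X j \<omega>)))
    \<le> ennreal (Kc \<rho> (Suc j) n)
      * (\<integral>\<^sup>+y'. ennreal (dist (F (Suc j) (X j \<omega>) (\<epsilon> (Suc j) \<omega>)) (F (Suc j) (X j \<omega>) y')) \<partial>law_eps)"
proof -
  define u where "u = Xvec X j \<omega>"
  have u: "u \<in> space (PiM {1..j} (\<lambda>_. borel))" "u j = X j \<omega>"
    using j Xvec_space[of j \<omega>] by (simp_all add: u_def Xvec_def)
  have regular: "regular_level (Suc j)"
    using j by (intro regular_level) auto
  then have "N (cond_fn (Suc j) (extend j u (\<epsilon> (Suc j) \<omega>)) - cond_fn (Suc j) (extend j u y))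
      \<le> Kc \<rho> (Suc j) n * dist (F (Suc j) (X j \<omega>) (\<epsilon> (Suc j) \<omega>)) (F (Suc j) (X j \<omega>) y)" for y
    using coordwise_lipschitz_extend[OF _ u(1) u(1), of "Kc \<rho> (Suc j) n" "cond_fn (Suc j)" "\<epsilon> (Suc j) \<omega>" y]
    unfolding regular_level_def u(2) by simp
  then have "ennreal (N (cond_fn (Suc j) (extend j u (\<epsilon> (Suc j) \<omega>))
      - (\<integral>y. cond_fn (Suc j) (extend j u y) \<partial>law_eps)))
      \<le> ennreal (Kc \<rho> (Suc j) n)
        * (\<integral>\<^sup>+y'. ennreal (dist (F (Suc j) (X j \<omega>) (\<epsilon> (Suc j) \<omega>)) (F (Suc j) (X j \<omega>) y')) \<partial>law_eps)"
    using Kc_rho_nonneg[of "Suc j"] measurable_F_section[of "Suc j" "X j \<omega>"] j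
    by (intro prob_space.jensen_deviation_le[OF prob_space_law_eps N_jensen_eps
        integrable_cond_fn_extend_section[OF j regular u(1)]]) auto
  then show ?thesis
    unfolding u_def Xvec_Suc[OF j(1)] cond_fn_step[OF j] .
qed

lemma martingale_diff_le:
  assumes "2 \<le> k" "k \<le> n"
  shows "ennreal (N (cond_fn k (Xvec X k \<omega>) - cond_fn (k - 1) (Xvec X (k - 1) \<omega>)))
    \<le> ennreal (Kc \<rho> k n)
      * (\<integral>\<^sup>+y'. ennreal (dist (F k (X (k - 1) \<omega>) (\<epsilon> k \<omega>)) (F k (X (k - 1) \<omega>) y')) \<partial>law_eps)"
proof -
  obtain j where "k = Suc j" using assms by (cases k) auto
  then show ?thesis using martingale_diff_Suc_le[of j \<omega>] assms by simp
qed

end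

theorem lemma2p1:
  fixes M :: "'a measure"
    and X :: "nat \<Rightarrow> 'a \<Rightarrow> 'x::polish_space"
    and \<epsilon> :: "nat \<Rightarrow> 'a \<Rightarrow> 'y::polish_space"
    and F :: "nat \<Rightarrow> 'x \<Rightarrow> 'y \<Rightarrow> 'x"
    and N :: "real^'d \<Rightarrow> real"
    and f :: "(nat \<Rightarrow> 'x) \<Rightarrow> real^'d"
    and n :: nat
    and \<rho> \<tau> \<xi> :: "nat \<Rightarrow> real"
  assumes M: "prob_space M"
    and eps_meas: "\<And>i. \<epsilon> i \<in> borel_measurable M"
    and eps_indep: "prob_space.indep_vars M (\<lambda>_. borel) \<epsilon> {1..}"
    and eps_ident: "\<And>i. i \<ge> 1 \<Longrightarrow> distr M borel (\<epsilon> i) = distr M borel (\<epsilon> 1)"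
    and X1_meas: "X 1 \<in> borel_measurable M"
    and X1_indep: "prob_space.indep_set M
        (sets (vimage_algebra (space M) (X 1) borel))
        (sets (vimage_algebra (space M) (\<lambda>\<omega>. \<lambda>i\<in>{2..}. \<epsilon> i \<omega>) (PiM {2..} (\<lambda>_. borel))))"
    and F_meas: "\<And>m. m \<ge> 2 \<Longrightarrow> (\<lambda>(x, y). F m x y) \<in> borel_measurable (borel \<Otimes>\<^sub>M borel)"
    and X_rec: "\<And>m \<omega>. m \<ge> 2 \<Longrightarrow> X m \<omega> = F m (X (m - 1) \<omega>) (\<epsilon> m \<omega>)"
    and N_norm: "is_norm N"
    and N_jensen_X1: "\<And>h. h \<in> borel_measurable (distr M borel (X 1)) \<Longrightarrow>
        ennreal (N (\<integral>x. h x \<partial>distr M borel (X 1))) \<le> (\<integral>\<^sup>+x. ennreal (N (h x)) \<partial>distr M borel (X 1))"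
    and N_jensen_eps: "\<And>h. h \<in> borel_measurable (distr M borel (\<epsilon> 1)) \<Longrightarrow>
        ennreal (N (\<integral>y. h y \<partial>distr M borel (\<epsilon> 1))) \<le> (\<integral>\<^sup>+y. ennreal (N (h y)) \<partial>distr M borel (\<epsilon> 1))"
    and n2: "n \<ge> 2"
    and f_meas: "f \<in> borel_measurable (PiM {1..n} (\<lambda>_. borel))"
    and f_lip: "\<And>x x'. x \<in> space (PiM {1..n} (\<lambda>_. (borel :: 'x measure))) \<Longrightarrow>
        x' \<in> space (PiM {1..n} (\<lambda>_. (borel :: 'x measure))) \<Longrightarrow>
        N (f x - f x') \<le> (\<Sum>i=1..n. dist (x i) (x' i))"
    and f_int: "integrable M (\<lambda>\<omega>. f (Xvec X n \<omega>))"
    and C1: "\<And>m. m \<ge> 2 \<Longrightarrow> 0 \<le> \<rho> m \<and> \<rho> m < 1 \<and>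
        (\<forall>x x'. (\<integral>\<^sup>+\<omega>. ennreal (dist (F m x (\<epsilon> 1 \<omega>)) (F m x' (\<epsilon> 1 \<omega>))) \<partial>M)
                  \<le> ennreal (\<rho> m * dist x x'))"
  shows "\<exists>g :: nat \<Rightarrow> (nat \<Rightarrow> 'x) \<Rightarrow> real^'d.
    let G\<^sub>X = (\<lambda>x. \<integral>\<^sup>+x'. ennreal (dist x x') \<partial>distr M borel (X 1));
        G\<^sub>\<epsilon> = (\<lambda>y. \<integral>\<^sup>+y'. ennreal (dist y y') \<partial>distr M borel (\<epsilon> 1));
        H = (\<lambda>k x y. \<integral>\<^sup>+y'. ennreal (dist (F k x y) (F k x y')) \<partial>distr M borel (\<epsilon> 1));
        Mart = (\<lambda>k \<omega>. g k (Xvec X k \<omega>) - g (k - 1) (Xvec X (k - 1) \<omega>))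
    in
    \<comment> \<open>g_k(X_1,...,X_k) is a version of E[f(X_1,...,X_n) | F_k], 0 <= k <= n\<close>
    (\<forall>k\<in>{0..n}. g k \<in> borel_measurable (PiM {1..k} (\<lambda>_. borel)) \<and>
        is_cond_exp_version M (Filt M X k) (\<lambda>\<omega>. f (Xvec X n \<omega>)) (\<lambda>\<omega>. g k (Xvec X k \<omega>))) \<and>
    \<comment> \<open>item 1\<close>
    (\<forall>k\<in>{1..n}. \<forall>x\<in>space (PiM {1..k} (\<lambda>_. borel)). \<forall>x'\<in>space (PiM {1..k} (\<lambda>_. borel)).
        N (g k x - g k x') \<le> (\<Sum>i\<in>{1..<k}. dist (x i) (x' i)) + Kc \<rho> k n * dist (x k) (x' k)) \<and>
    \<comment> \<open>item 2\<close>
    (\<forall>\<omega>\<in>space M. ennreal (N (Mart 1 \<omega>)) \<le> ennreal (Kc \<rho> 1 n) * G\<^sub>X (X 1 \<omega>)) \<and>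
    (\<forall>k\<in>{2..n}. \<forall>\<omega>\<in>space M.
        ennreal (N (Mart k \<omega>)) \<le> ennreal (Kc \<rho> k n) * H k (X (k - 1) \<omega>) (\<epsilon> k \<omega>)) \<and>
    \<comment> \<open>items 3 to 6, under (C2)\<close>
    ((\<forall>m\<ge>2. 0 \<le> \<tau> m \<and> 0 \<le> \<xi> m \<and> (\<forall>x y y'. dist (F m x y) (F m x y') \<le> \<tau> m * dist y y' + \<xi> m))
     \<longrightarrow>
       (\<forall>k\<in>{2..n}. \<forall>x y. H k x y \<le> ennreal (\<tau> k) * G\<^sub>\<epsilon> y + ennreal (\<xi> k)) \<and>
       (\<forall>k\<in>{2..n}. \<forall>\<omega>\<in>space M.
          ennreal (N (Mart k \<omega>)) \<le> ennreal (Kc \<rho> k n) * (ennreal (\<tau> k) * G\<^sub>\<epsilon> (\<epsilon> k \<omega>) + ennreal (\<xi> k))) \<and>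
       \<comment> \<open>item 4: condition (A)\<close>
       ((\<exists>\<alpha> r \<eta>. 0 \<le> \<alpha> \<and> \<alpha> < 1 \<and> 0 < r \<and> r < 1 \<and> 0 < \<eta> \<and>
           (\<forall>m\<ge>2. \<rho> m \<le> 1 - r / real m powr \<alpha> \<and> max (\<xi> m) (\<tau> m) \<le> \<eta> / real m powr \<alpha>))
        \<longrightarrow> (\<exists>B. \<forall>m\<ge>2. Kc \<rho> 1 m \<le> B) \<and>
            (\<exists>B. \<forall>m\<ge>2. \<forall>k\<in>{2..m}. Kc \<rho> k m * (\<tau> k + \<xi> k) \<le> B)) \<and>
       \<comment> \<open>item 5: condition (B)\<close>
       (\<forall>\<alpha> r \<eta>. (0 < \<alpha> \<and> \<alpha> < 1 \<and> 0 < r \<and> r < 1 \<and> 0 < \<eta> \<and>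
           (\<forall>m\<ge>2. \<rho> m \<le> 1 - r / real m powr \<alpha> \<and> max (\<xi> m) (\<tau> m) \<le> \<eta>))
        \<longrightarrow> (\<exists>B. \<forall>m\<ge>2. Kc \<rho> 1 m \<le> B) \<and>
            (\<exists>C. \<forall>m\<ge>2. \<forall>k\<in>{2..m}. Kc \<rho> k m * (\<tau> k + \<xi> k) \<le> C * real k powr \<alpha>)) \<and>
       \<comment> \<open>item 6: condition (C)\<close>
       (\<forall>\<alpha> r \<eta>. (0 < \<alpha> \<and> \<alpha> \<le> 1 \<and> 0 < r \<and> r < 1 \<and> 0 < \<eta> \<and>
           (\<forall>m\<ge>2. \<rho> m \<le> r \<and> max (\<xi> m) (\<tau> m) \<le> \<eta> / real m powr \<alpha>))
        \<longrightarrow> (\<exists>B. \<forall>m\<ge>2. Kc \<rho> 1 m \<le> B) \<and>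
            (\<exists>C. \<forall>m\<ge>2. \<forall>k\<in>{2..m}. Kc \<rho> k m * \<tau> k \<le> C * real k powr (- \<alpha>))))"
proof -
  interpret chain_functional M X \<epsilon> F N f n \<rho>
    by (rule chain_functional.intro[OF M], unfold_locales) (fact+)
  have rho: "\<forall>m\<ge>2. 0 \<le> \<rho> m"
    using rho_nonneg by blast
  show ?thesis
    unfolding Let_def
  proof (intro exI[of _ cond_fn] conjI ballI impI allI, goal_cases)
    case (1 k) then show ?case by (intro measurable_cond_fn) simp
  next
    case (2 k) then show ?case by (intro cond_exp_version_cond_fn) simp
  next
    case (3 k x x') then show ?case
      using regular_level[of k] by (simp add: regular_level_def coordwise_lipschitz_def)
  next
    case (4 \<omega>) then show ?case using martingale_diff_1_le by simp
  next
    case (5 k \<omega>) then show ?case using martingale_diff_le by simp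
  next
    case (6 k x y) then show ?case
      by (intro prob_space.nn_integral_le_affine[OF prob_space_law_eps]) auto
  next
    case (7 k \<omega>) then show ?case
      by (intro order_trans[OF martingale_diff_le mult_left_mono]
          prob_space.nn_integral_le_affine[OF prob_space_law_eps]) auto
  next
    case 8 then show ?case using Kc_bounds_cond_A[OF rho] by blast
  next
    case 9 then show ?case using Kc_bounds_cond_A[OF rho] by blast
  next
    case (10 \<alpha> r \<eta>) then show ?case using Kc_bounds_cond_B[OF rho] by blast
  next
    case (11 \<alpha> r \<eta>) then show ?case using Kc_bounds_cond_B[OF rho] by blast
  next
    case (12 \<alpha> r \<eta>) then show ?case using Kc_bounds_cond_C[OF rho] by blast
  next
    case (13 \<alpha> r \<eta>) then show ?case using Kc_bounds_cond_C[OF rho] by blast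
  qed
qed

end
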